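(* Consider a general POVM attack on single-photon SARG04: Eve uses a POVM $\{M_{\mathrm{vac}},M_0,\dots,M_{J-1}\}$ on $\mathbb{C}^2$ (positive operators with $M_{\mathrm{vac}}+\sum_iM_i=I$, $J$ arbitrary) and, on outcome $i$, sends Bob an arbitrary qubit state $|\sigma_i\rangle$ (on outcome vac she sends nothing). The resulting unnormalized state of Alice and Bob is $$\rho_{AB}=\sum_{k=0}^{3}\sum_{i=0}^{J-1}\operatorname{Tr}_{E}\!\Big[(I_A\otimes M_i)(I_A\otimes R^k)|\Psi\rangle\langle\Psi|(I_A\otimes R^{-k})\Big]\otimes F R^{-k}|\sigma_i\rangle\langle\sigma_i|R^{k}F^\dagger,$$ with $|\Psi\rangle=|0_z\rangle_A|\varphi_0\rangle_E+|1_z\rangle_A|\varphi_1\rangle_E$, and the induced bit error rate (defined when $\operatorname{Tr}\rho_{AB}>0$) is $$e_b=\frac{\langle0_z1_z|\rho_{AB}|0_z1_z\rangle+\langle1_z0_z|\rho_{AB}|1_z0_z\rangle}{\operatorname{Tr}\rho_{AB}}.$$ Then the smallest bit error rate $e_b$ that Eve can induce by such an attack is $\tfrac13$.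
   Context: Qubits use bases related by $|0_x\rangle=(|0_z\rangle+|1_z\rangle)/\sqrt2$, $|1_x\rangle=(|0_z\rangle-|1_z\rangle)/\sqrt2$. Let $|\varphi_0\rangle=\cos(\pi/8)|0_x\rangle+\sin(\pi/8)|1_x\rangle$, $R=\cos(\pi/4)I+\sin(\pi/4)(|1_x\rangle\langle0_x|-|0_x\rangle\langle1_x|)$, $|\varphi_m\rangle=R^{-m}|\varphi_0\rangle$ (indices mod 4), and $F=\sin(\pi/8)|0_x\rangle\langle0_x|+\cos(\pi/8)|1_x\rangle\langle1_x|$ (Bob's successful filtering, i.e. conclusive result). Alice applies the random rotation $R^k$, $k\in\{0,1,2,3\}$ uniformly, to the transmitted qubit; Bob applies $R^{-k}$ then $F$. $\operatorname{Tr}_E$ is the partial trace over the transmitted qubit. *)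

theory Defs
  imports "HOL-Analysis.Analysis"
begin

type_synonym qvec = "complex^2"
type_synonym qop = "complex^2^2"
type_synonym qop2 = "complex^(2 \<times> 2)^(2 \<times> 2)"

definition z0 :: qvec where "z0 = (\<chi> i. if i = 0 then 1 else 0)"
definition z1 :: qvec where "z1 = (\<chi> i. if i = 1 then 1 else 0)"
definition x0 :: qvec where "x0 = (1 / sqrt 2) *\<^sub>R (z0 + z1)"
definition x1 :: qvec where "x1 = (1 / sqrt 2) *\<^sub>R (z0 - z1)"

definition outer :: "complex^'n::finite \<Rightarrow> complex^'n::finite \<Rightarrow> complex^'n::finite^'n::finite"
  where "outer v w = (\<chi> i j. v$i * cnj (w$j))"

definition adj :: "complex^'n::finite^'m::finite \<Rightarrow> complex^'m::finite^'n::finite"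
  where "adj A = (\<chi> i j. cnj (A$j$i))"

definition braket :: "complex^'n::finite \<Rightarrow> complex^'n::finite \<Rightarrow> complex"
  where "braket v w = (\<Sum>i\<in>UNIV. cnj (v$i) * w$i)"

definition kron :: "complex^'n::finite^'n::finite \<Rightarrow> complex^'m::finite^'m::finite \<Rightarrow> complex^('n::finite \<times> 'm::finite)^('n::finite \<times> 'm::finite)"
  where "kron A B = (\<chi> p q. A$fst p$fst q * B$snd p$snd q)"

definition kronv :: "complex^'n::finite \<Rightarrow> complex^'m::finite \<Rightarrow> complex^('n::finite \<times> 'm::finite)"
  where "kronv v w = (\<chi> p. v$fst p * w$snd p)"

definition ptrace2 :: "complex^('n::finite \<times> 'm::finite)^('n::finite \<times> 'm::finite) \<Rightarrow> complex^'n::finite^'n::finite"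
  where "ptrace2 X = (\<chi> i k. \<Sum>j\<in>UNIV. X$(i,j)$(k,j))"

definition positive_op :: "complex^'n::finite^'n::finite \<Rightarrow> bool"
  where "positive_op A \<longleftrightarrow> (\<forall>v. braket v (A *v v) \<in> \<real> \<and> 0 \<le> Re (braket v (A *v v)))"

definition smul :: "complex \<Rightarrow> complex^'n::finite^'m::finite \<Rightarrow> complex^'n::finite^'m::finite"
  where "smul c A = (\<chi> i j. c * A$i$j)"

primrec mpow :: "complex^'n::finite^'n::finite \<Rightarrow> nat \<Rightarrow> complex^'n::finite^'n::finite" where
  "mpow A 0 = mat 1"
| "mpow A (Suc n) = A ** mpow A n"

definition Rot :: qop where
  "Rot = smul (complex_of_real (cos (pi/4))) (mat 1)
        + smul (complex_of_real (sin (pi/4))) (outer x1 x0 - outer x0 x1)"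

definition Rinv :: qop where
  "Rinv = matrix_inv Rot"

definition phi0 :: qvec where
  "phi0 = cos (pi/8) *\<^sub>R x0 + sin (pi/8) *\<^sub>R x1"

definition phi :: "nat \<Rightarrow> qvec" where
  "phi m = mpow Rinv m *v phi0"

definition Filt :: qop where
  "Filt = smul (complex_of_real (sin (pi/8))) (outer x0 x0) + smul (complex_of_real (cos (pi/8))) (outer x1 x1)"

definition Psi :: "complex^(2 \<times> 2)" where
  "Psi = kronv z0 (phi 0) + kronv z1 (phi 1)"

definition rhoAB :: "nat \<Rightarrow> (nat \<Rightarrow> qop) \<Rightarrow> (nat \<Rightarrow> qvec) \<Rightarrow> qop2" where
  "rhoAB J M \<sigma> = (\<Sum>k<4. \<Sum>i<J.
      kron (ptrace2 (kron (mat 1) (M i) ** kron (mat 1) (mpow Rot k) ** outer Psi Psi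
                      ** kron (mat 1) (mpow Rinv k)))
           (Filt ** mpow Rinv k ** outer (\<sigma> i) (\<sigma> i) ** mpow Rot k ** adj Filt))"

definition bit_error :: "qop2 \<Rightarrow> real" where
  "bit_error \<rho> = Re ((braket (kronv z0 z1) (\<rho> *v kronv z0 z1)
                     + braket (kronv z1 z0) (\<rho> *v kronv z1 z0)) / trace \<rho>)"

definition valid_attack :: "nat \<Rightarrow> qop \<Rightarrow> (nat \<Rightarrow> qop) \<Rightarrow> (nat \<Rightarrow> qvec) \<Rightarrow> bool" where
  "valid_attack J Mvac M \<sigma> \<longleftrightarrow>
     positive_op Mvac \<and> (\<forall>i<J. positive_op (M i)) \<and>
     Mvac + (\<Sum>i<J. M i) = mat 1 \<and> (\<forall>i<J. norm (\<sigma> i) = 1)"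

end

theory Submission
  imports Defs
begin

(*
  Each term of rho_AB is a tensor product, so its diagonal entry at (a, b) is a sum over the
  rotations k and Eve's outcomes i of Alice's weight <u|M_i|u>, u = R^k |phi_a>, times Bob's weight
  |<R^k f_b|sigma_i>|^2, where f_b is the b-th column of F. Up to sign and a factor 1/sqrt 2, all
  these vectors lie on the orbit of (cos pi/8, sin pi/8) under the 45 degree rotation R, so both
  weights are explicit quadratic forms. Summing over k, outcome i contributes an error weight E_i
  and a total weight T_i with 3 E_i - T_i = 2 (<x|M_i|x> + <y|M_i|y>), where x and y are the real
  and imaginary parts of (sigma_i1, -sigma_i0). Positivity of M_i gives T_i <= 3 E_i, hence
  e_b >= 1/3; measuring in the z basis and resending |0_z> attains 1/3.
*)

section \<open>Matrices, tensor products and partial traces\<close>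

lemma adj_adj: "adj (adj A) = A"
  by (simp add: adj_def vec_eq_iff)

lemma adj_mult: "adj (A ** B) = adj B ** adj A"
  by (simp add: adj_def matrix_matrix_mult_def vec_eq_iff mult.commute)

lemma adj_mat_1: "adj (mat 1 :: complex^'n::finite^'n) = mat 1"
  by (simp add: adj_def mat_def vec_eq_iff)

lemma mpow_commute: "A ** mpow A n = mpow A n ** A"
  by (induction n) (simp_all, metis matrix_mul_assoc)

lemma adj_mpow: "adj (mpow A n) = mpow (adj A) n"
  by (induction n) (simp_all add: adj_mat_1 adj_mult mpow_commute)

lemma matrix_inv_eqI:
  fixes A B :: "'a::semiring_1^'n::finite^'n"
  assumes "A ** B = mat 1" and "B ** A = mat 1"
  shows "matrix_inv A = B"
proof -
  have inv: "A ** matrix_inv A = mat 1 \<and> matrix_inv A ** A = mat 1"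
    unfolding matrix_inv_def by (rule someI[of _ B]) (use assms in simp)
  have "matrix_inv A = matrix_inv A ** (A ** B)" by (simp add: assms)
  also have "\<dots> = B" by (simp add: inv matrix_mul_assoc)
  finally show ?thesis .
qed

lemma matrix_vector_mult_nth: "(A *v v) $ i = braket (column i (adj A)) v"
  by (simp add: matrix_vector_mult_def braket_def column_def adj_def)

lemma column_matrix_mult: "column j (A ** B) = A *v column j B"
  by (simp add: column_def matrix_matrix_mult_def matrix_vector_mult_def vec_eq_iff)

lemma sum_UNIV_prod: "(\<Sum>p\<in>UNIV. f p) = (\<Sum>x\<in>UNIV. \<Sum>y\<in>UNIV. f (x, y))"
  by (metis UNIV_Times_UNIV sum.cartesian_product')

lemma kron_mult:
  fixes A C :: "complex^'n::finite^'n" and B D :: "complex^'m::finite^'m"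
  shows "kron A B ** kron C D = kron (A ** C) (B ** D)"
proof -
  have "(kron A B ** kron C D) $ p $ q
      = (\<Sum>x\<in>UNIV. \<Sum>y\<in>UNIV. (A$fst p$x * C$x$fst q) * (B$snd p$y * D$y$snd q))" for p q
    unfolding kron_def matrix_matrix_mult_def by (simp add: sum_UNIV_prod mult_ac)
  then show ?thesis
    by (simp add: vec_eq_iff kron_def matrix_matrix_mult_def sum_product)
qed

lemma kron_nth_pair: "kron A B $ (a, b) $ (c, d) = A $ a $ c * B $ b $ d"
  by (simp add: kron_def)

lemma adj_kron: "adj (kron A B) = kron (adj A) (adj B)"
  by (simp add: adj_def kron_def vec_eq_iff)

lemma sandwich_outer_nth: "(A ** outer v v ** adj C) $ p $ q = (A *v v) $ p * cnj ((C *v v) $ q)"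
  by (simp add: matrix_matrix_mult_def matrix_vector_mult_def outer_def adj_def
      sum_distrib_left sum_distrib_right mult_ac)

lemma sandwich_outer_diag: "(A ** outer v v ** adj A) $ p $ p = of_real ((cmod ((A *v v) $ p))\<^sup>2)"
  by (simp only: sandwich_outer_nth complex_norm_square)

definition tensor_slice :: "complex^('n::finite \<times> 'm::finite) \<Rightarrow> 'n \<Rightarrow> complex^'m" where
  "tensor_slice W a = (\<chi> j. W $ (a, j))"

lemma kron_mat_1_mult_vec: "(kron (mat 1) P *v W) $ (a, j) = (P *v tensor_slice W a) $ j"
proof -
  have "(\<Sum>l\<in>UNIV. (if a = x then 1 else 0) * P$j$l * W$(x, l))
      = (if a = x then \<Sum>l\<in>UNIV. P$j$l * W$(a, l) else 0)" for x
    by simp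
  then show ?thesis
    by (simp add: matrix_vector_mult_def kron_def mat_def tensor_slice_def sum_UNIV_prod)
qed

lemma ptrace2_sandwich_outer_diag:
  fixes P B :: "complex^'m::finite^'m" and W :: "complex^('n::finite \<times> 'm)"
  shows "ptrace2 (kron (mat 1) P ** outer W W ** kron (mat 1) (adj B)) $ a $ a
     = braket (B *v tensor_slice W a) (P *v tensor_slice W a)"
proof -
  have "kron (mat 1 :: complex^'n^'n) (adj B) = adj (kron (mat 1) B)"
    by (simp add: adj_kron adj_mat_1)
  then show ?thesis
    unfolding ptrace2_def braket_def
    by (simp only: sandwich_outer_nth kron_mat_1_mult_vec vec_lambda_beta mult.commute)
qed

lemma positive_op_braket_real:
  assumes "positive_op M"
  shows "braket u (M *v u) = of_real (Re (braket u (M *v u)))"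
  using assms unfolding positive_op_def by (simp add: of_real_Re)

lemma positive_op_outer: "positive_op (outer v v)"
proof -
  have "braket w (outer v v *v w) = braket v w * cnj (braket v w)" for w
    by (simp add: braket_def outer_def matrix_vector_mult_def sum_distrib_left sum_distrib_right mult_ac)
      (rule sum.swap)
  then show ?thesis
    unfolding positive_op_def by (simp add: complex_mult_cnj)
qed

lemma matrix_vector_mult_scaleR_right:
  fixes v :: "'a::real_algebra_1^'n::finite"
  shows "A *v (x *\<^sub>R v) = x *\<^sub>R (A *v v)"
  by (simp add: matrix_vector_mult_def vec_eq_iff scaleR_sum_right)

lemma braket_scaleR_left: "braket (x *\<^sub>R v) w = of_real x * braket v w"
  unfolding braket_def vector_scaleR_component
  by (simp add: scaleR_conv_of_real sum_distrib_left mult_ac)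

section \<open>Real vectors and matrices in dimension two\<close>

lemma UNIV_2_eq: "(UNIV :: 2 set) = {0, 1}"
  using exhaust_2 by (auto, metis zero_neq_one)

lemma all_2: "(\<forall>i::2. P i) \<longleftrightarrow> P 0 \<and> P 1"
  by (metis UNIV_I insertE singletonD UNIV_2_eq)

lemma sum_UNIV_2: "(\<Sum>i\<in>UNIV. f i) = f (0::2) + f 1"
  by (simp add: UNIV_2_eq)

lemma vec_eq_2: "(x :: 'a^2) = y \<longleftrightarrow> x$0 = y$0 \<and> x$1 = y$1"
  by (simp add: vec_eq_iff all_2)

definition vec2 :: "real \<Rightarrow> real \<Rightarrow> complex^2" where
  "vec2 a b = (\<chi> i. if i = 0 then of_real a else of_real b)"

definition mat2 :: "real \<Rightarrow> real \<Rightarrow> real \<Rightarrow> real \<Rightarrow> complex^2^2" where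
  "mat2 a b c d = (\<chi> i j. of_real (if i = 0 then if j = 0 then a else b else if j = 0 then c else d))"

lemma vec2_nth [simp]: "vec2 a b $ 0 = of_real a" "vec2 a b $ 1 = of_real b"
  by (simp_all add: vec2_def)

lemma mat2_nth [simp]:
  "mat2 a b c d $ 0 $ 0 = of_real a" "mat2 a b c d $ 0 $ 1 = of_real b"
  "mat2 a b c d $ 1 $ 0 = of_real c" "mat2 a b c d $ 1 $ 1 = of_real d"
  by (simp_all add: mat2_def)

lemma mat_eq_2: "(A :: 'a^2^2) = B \<longleftrightarrow> A$0$0 = B$0$0 \<and> A$0$1 = B$0$1 \<and> A$1$0 = B$1$0 \<and> A$1$1 = B$1$1"
  by (auto simp: vec_eq_iff all_2)

lemma vec2_eq_iff: "vec2 a b = vec2 c d \<longleftrightarrow> a = c \<and> b = d"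
  by (simp add: vec_eq_2)

lemma mat2_eq_iff: "mat2 a b c d = mat2 a' b' c' d' \<longleftrightarrow> a = a' \<and> b = b' \<and> c = c' \<and> d = d'"
  by (simp add: mat_eq_2)

lemma mat2_mult_vec2: "mat2 a b c d *v vec2 x y = vec2 (a*x + b*y) (c*x + d*y)"
  by (simp add: vec_eq_2 matrix_vector_mult_def sum_UNIV_2)

lemma mat2_mult:
  "mat2 a b c d ** mat2 a' b' c' d' = mat2 (a*a' + b*c') (a*b' + b*d') (c*a' + d*c') (c*b' + d*d')"
  by (simp add: mat_eq_2 matrix_matrix_mult_def sum_UNIV_2)

lemma mat2_add: "mat2 a b c d + mat2 a' b' c' d' = mat2 (a + a') (b + b') (c + c') (d + d')"
  by (simp add: mat_eq_2)

lemma mat2_diff: "mat2 a b c d - mat2 a' b' c' d' = mat2 (a - a') (b - b') (c - c') (d - d')"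
  by (simp add: mat_eq_2)

lemma smul_mat2: "smul (of_real x) (mat2 a b c d) = mat2 (x * a) (x * b) (x * c) (x * d)"
  by (simp add: mat_eq_2 smul_def)

lemma adj_mat2: "adj (mat2 a b c d) = mat2 a c b d"
  by (simp add: mat_eq_2 adj_def)

lemma mat_1_eq_mat2: "mat 1 = mat2 1 0 0 1"
  by (simp add: mat_eq_2 mat_def)

lemma column_mat2: "column 0 (mat2 a b c d) = vec2 a c" "column 1 (mat2 a b c d) = vec2 b d"
  by (simp_all add: vec_eq_2 column_def)

lemma scaleR_vec2: "x *\<^sub>R vec2 a b = vec2 (x*a) (x*b)"
  unfolding vec_eq_2 vector_scaleR_component by (simp add: scaleR_conv_of_real)

lemma outer_vec2: "outer (vec2 a b) (vec2 c d) = mat2 (a * c) (a * d) (b * c) (b * d)"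
  by (simp add: mat_eq_2 outer_def)

lemma vec2_add: "vec2 a b + vec2 c d = vec2 (a + c) (b + d)"
  by (simp add: vec_eq_2)

lemma vec2_diff: "vec2 a b - vec2 c d = vec2 (a - c) (b - d)"
  by (simp add: vec_eq_2)

lemma braket_vec2: "braket (vec2 a b) s = of_real a * s$0 + of_real b * s$1"
  by (simp add: braket_def sum_UNIV_2)

lemma Re_braket_vec2_mult:
  "Re (braket (vec2 a b) (M *v vec2 a b))
     = a*a * Re (M$0$0) + a*b * (Re (M$0$1) + Re (M$1$0)) + b*b * Re (M$1$1)"
  by (simp add: braket_vec2 matrix_vector_mult_def sum_UNIV_2 algebra_simps)

lemma cmod_braket_vec2:
  "(cmod (braket (vec2 a b) s))\<^sup>2
     = a*a * (cmod (s$0))\<^sup>2 + 2 * (a*b) * Re (s$0 * cnj (s$1)) + b*b * (cmod (s$1))\<^sup>2"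
  unfolding braket_vec2 cmod_power2 by (simp add: power2_eq_square algebra_simps)

section \<open>The SARG04 operators\<close>

definition c8 :: real where "c8 = cos (pi / 8)"
definition s8 :: real where "s8 = sin (pi / 8)"

lemma c8_s8_rotate: "sqrt 2 / 2 * c8 + sqrt 2 / 2 * s8 = c8" "sqrt 2 / 2 * c8 - sqrt 2 / 2 * s8 = s8"
proof -
  have "sin (pi / 8 + pi / 4) = sqrt 2 / 2 * c8 + sqrt 2 / 2 * s8"
       "cos (pi / 8 + pi / 4) = sqrt 2 / 2 * c8 - sqrt 2 / 2 * s8"
    unfolding sin_add cos_add by (simp_all add: c8_def s8_def sin_45 cos_45 mult_ac)
  moreover have "sin (pi / 8 + pi / 4) = c8" "cos (pi / 8 + pi / 4) = s8"
    unfolding c8_def s8_def using cos_sin_eq[of "pi / 8"] sin_cos_eq[of "pi / 8"] by simp_all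
  ultimately show "sqrt 2 / 2 * c8 + sqrt 2 / 2 * s8 = c8" "sqrt 2 / 2 * c8 - sqrt 2 / 2 * s8 = s8"
    by simp_all
qed

lemma c8_s8_products: "c8 * c8 = (2 + sqrt 2) / 4" "s8 * s8 = (2 - sqrt 2) / 4" "c8 * s8 = sqrt 2 / 4"
proof -
  show c8_c8: "c8 * c8 = (2 + sqrt 2) / 4"
    using cos_double_cos[of "pi / 8"] by (simp add: c8_def cos_45 power2_eq_square)
  show "s8 * s8 = (2 - sqrt 2) / 4"
    using sin_squared_eq[of "pi / 8"] c8_c8 by (simp add: c8_def s8_def power2_eq_square)
  show "c8 * s8 = sqrt 2 / 4"
    using sin_double[of "pi / 8"] by (simp add: c8_def s8_def sin_45 mult.commute)
qed

lemma z0_eq: "z0 = vec2 1 0" and z1_eq: "z1 = vec2 0 1"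
  by (simp_all add: vec_eq_2 z0_def z1_def)

lemma x0_eq: "x0 = vec2 (sqrt 2 / 2) (sqrt 2 / 2)" and x1_eq: "x1 = vec2 (sqrt 2 / 2) (- sqrt 2 / 2)"
proof -
  have inv_sqrt2: "1 / sqrt 2 = sqrt 2 / 2"
    by (simp add: field_simps)
  show "x0 = vec2 (sqrt 2 / 2) (sqrt 2 / 2)" "x1 = vec2 (sqrt 2 / 2) (- sqrt 2 / 2)"
    unfolding x0_def x1_def z0_eq z1_eq vec2_add vec2_diff scaleR_vec2 by (simp_all add: inv_sqrt2)
qed

lemma Rot_eq: "Rot = mat2 (sqrt 2 / 2) (sqrt 2 / 2) (- sqrt 2 / 2) (sqrt 2 / 2)"
  unfolding Rot_def x0_eq x1_eq outer_vec2 mat2_diff mat_1_eq_mat2 smul_mat2 mat2_add cos_45 sin_45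
  by (simp add: field_simps)

lemma Rinv_eq_adj: "Rinv = adj Rot"
  unfolding Rinv_def
  by (rule matrix_inv_eqI) (simp_all add: Rot_eq adj_mat2 mat2_mult mat_1_eq_mat2 field_simps)

lemma Rot_mult_vec2:
  "Rot *v vec2 a b = vec2 (sqrt 2 / 2 * a + sqrt 2 / 2 * b) (sqrt 2 / 2 * b - sqrt 2 / 2 * a)"
  by (simp add: Rot_eq mat2_mult_vec2 vec2_eq_iff)

text \<open>All vectors met below lie, up to sign, on the orbit of \<open>(c8, s8)\<close> under \<open>Rot\<close>.\<close>

lemma Rot_orbit:
  "Rot *v vec2 c8 s8 = vec2 c8 (- s8)"
  "Rot *v vec2 c8 (- s8) = vec2 s8 (- c8)"
  "Rot *v vec2 s8 (- c8) = vec2 (- s8) (- c8)"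
  "Rot *v vec2 (- s8) (- c8) = vec2 (- c8) (- s8)"
  "Rot *v vec2 s8 c8 = vec2 c8 s8"
  "Rot *v vec2 (- s8) c8 = vec2 s8 c8"
  unfolding Rot_mult_vec2 vec2_eq_iff mult_minus_right using c8_s8_rotate by (intro conjI; linarith)+

lemma Filt_eq:
  "Filt = mat2 (sqrt 2 / 2 * c8) (- (sqrt 2 / 2 * s8)) (- (sqrt 2 / 2 * s8)) (sqrt 2 / 2 * c8)"
  unfolding Filt_def x0_eq x1_eq outer_vec2 smul_mat2 mat2_add mat2_eq_iff
    c8_def[symmetric] s8_def[symmetric]
  using c8_s8_rotate by (simp add: field_simps)

lemma adj_Filt: "adj Filt = Filt"
  by (simp add: Filt_eq adj_mat2)

lemma column_Filt:
  "column 0 Filt = (sqrt 2 / 2) *\<^sub>R vec2 c8 (- s8)"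
  "column 1 Filt = (sqrt 2 / 2) *\<^sub>R vec2 (- s8) c8"
  by (simp_all add: Filt_eq column_mat2 scaleR_vec2)

lemma Rinv_mult_vec2:
  "Rinv *v vec2 a b = vec2 (sqrt 2 / 2 * a - sqrt 2 / 2 * b) (sqrt 2 / 2 * a + sqrt 2 / 2 * b)"
  by (simp add: Rinv_eq_adj Rot_eq adj_mat2 mat2_mult_vec2 vec2_eq_iff)

lemma phi_eq: "phi 0 = vec2 c8 s8" "phi 1 = vec2 s8 c8"
proof -
  show phi_0: "phi 0 = vec2 c8 s8"
    unfolding phi_def phi0_def x0_eq x1_eq c8_def[symmetric] s8_def[symmetric] scaleR_vec2 vec2_add
    using c8_s8_rotate by (simp add: vec2_eq_iff mult_ac)
  have "phi 1 = Rinv *v phi 0"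
    by (simp add: phi_def)
  then show "phi 1 = vec2 s8 c8"
    unfolding phi_0 Rinv_mult_vec2 using c8_s8_rotate by simp
qed

lemma tensor_slice_Psi: "tensor_slice Psi 0 = vec2 c8 s8" "tensor_slice Psi 1 = vec2 s8 c8"
  unfolding tensor_slice_def Psi_def kronv_def phi_eq z0_eq z1_eq by (simp_all add: vec_eq_2)

section \<open>The diagonal of the Alice-Bob state\<close>

definition alice_weight :: "qop \<Rightarrow> nat \<Rightarrow> 2 \<Rightarrow> real" where
  "alice_weight M k a =
     (let u = mpow Rot k *v tensor_slice Psi a in Re (braket u (M *v u)))"

definition bob_weight :: "qvec \<Rightarrow> nat \<Rightarrow> 2 \<Rightarrow> real" where
  "bob_weight s k b = (cmod (braket (mpow Rot k *v column b Filt) s))\<^sup>2"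

lemma alice_block_diag:
  assumes "positive_op M"
  shows "ptrace2 (kron (mat 1) M ** kron (mat 1) (mpow Rot k) ** outer Psi Psi
      ** kron (mat 1) (mpow Rinv k)) $ a $ a = of_real (alice_weight M k a)"
proof -
  define u where "u = mpow Rot k *v tensor_slice Psi a"
  have "kron (mat 1 :: qop) M ** kron (mat 1) (mpow Rot k) = kron (mat 1) (M ** mpow Rot k)"
    by (simp add: kron_mult)
  moreover have "mpow Rinv k = adj (mpow Rot k)"
    by (simp add: Rinv_eq_adj adj_mpow)
  ultimately have "ptrace2 (kron (mat 1) M ** kron (mat 1) (mpow Rot k) ** outer Psi Psi
      ** kron (mat 1) (mpow Rinv k)) $ a $ a = braket u (M *v u)"
    by (simp add: ptrace2_sandwich_outer_diag u_def matrix_vector_mul_assoc[symmetric])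
  also have "\<dots> = of_real (alice_weight M k a)"
    unfolding alice_weight_def Let_def u_def by (rule positive_op_braket_real[OF assms])
  finally show ?thesis .
qed

lemma bob_block_diag:
  "(Filt ** mpow Rinv k ** outer s s ** mpow Rot k ** adj Filt) $ b $ b = of_real (bob_weight s k b)"
proof -
  have adj_P: "mpow Rot k ** adj Filt = adj (Filt ** mpow Rinv k)"
    by (simp add: adj_mult Rinv_eq_adj adj_mpow adj_adj)
  have "Filt ** mpow Rinv k ** outer s s ** mpow Rot k ** adj Filt
      = (Filt ** mpow Rinv k) ** outer s s ** adj (Filt ** mpow Rinv k)"
    unfolding adj_P[symmetric] by (simp add: matrix_mul_assoc)
  moreover have "column b (adj (Filt ** mpow Rinv k)) = mpow Rot k *v column b Filt"
    by (simp add: adj_mult Rinv_eq_adj adj_mpow adj_adj column_matrix_mult adj_Filt)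
  ultimately show ?thesis
    by (simp add: sandwich_outer_diag matrix_vector_mult_nth bob_weight_def)
qed

lemma rhoAB_diag:
  assumes "\<forall>i<J. positive_op (M i)"
  shows "rhoAB J M \<sigma> $ (a, b) $ (a, b)
    = of_real (\<Sum>i<J. \<Sum>k<4. alice_weight (M i) k a * bob_weight (\<sigma> i) k b)"
proof -
  have "rhoAB J M \<sigma> $ (a, b) $ (a, b)
      = of_real (\<Sum>k<4. \<Sum>i<J. alice_weight (M i) k a * bob_weight (\<sigma> i) k b)"
    unfolding rhoAB_def using assms by (simp add: kron_nth_pair alice_block_diag bob_block_diag)
  then show ?thesis
    by (simp only: sum.swap[of _ "{..<4}"])
qed

definition error_weight :: "qop \<Rightarrow> qvec \<Rightarrow> real" where
  "error_weight M s =
     (\<Sum>k<4. alice_weight M k 0 * bob_weight s k 1 + alice_weight M k 1 * bob_weight s k 0)"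

definition total_weight :: "qop \<Rightarrow> qvec \<Rightarrow> real" where
  "total_weight M s = (\<Sum>a\<in>UNIV. \<Sum>b\<in>UNIV. \<Sum>k<4. alice_weight M k a * bob_weight s k b)"

lemma braket_axis: "braket (axis p 1) v = v $ p"
proof -
  have "cnj (axis p 1 $ i) * v $ i = (if i = p then v $ i else 0)" for i
    by (simp add: axis_def)
  then show ?thesis
    by (simp add: braket_def)
qed

lemma braket_axis_diag: "braket (axis p 1) (X *v axis p 1) = X $ p $ p"
proof -
  have "X $ p $ i * axis p 1 $ i = (if i = p then X $ p $ i else 0)" for i
    by (simp add: axis_def)
  then show ?thesis
    by (simp add: braket_axis matrix_vector_mult_def)
qed

lemma kronv_z_axis: "kronv z0 z1 = axis (0, 1) 1" "kronv z1 z0 = axis (1, 0) 1"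
  by (auto simp: vec_eq_iff kronv_def z0_def z1_def axis_def)

lemma sum_swap_innermost:
  "(\<Sum>a\<in>A. \<Sum>b\<in>B. \<Sum>i\<in>I. g i a b) = (\<Sum>i\<in>I. \<Sum>a\<in>A. \<Sum>b\<in>B. g i a b)"
  by (simp only: sum.swap[of _ I B]) (rule sum.swap)

lemma trace_rhoAB:
  assumes "\<forall>i<J. positive_op (M i)"
  shows "trace (rhoAB J M \<sigma>) = of_real (\<Sum>i<J. total_weight (M i) (\<sigma> i))"
proof -
  have "trace (rhoAB J M \<sigma>) = (\<Sum>a\<in>UNIV. \<Sum>b\<in>UNIV. rhoAB J M \<sigma> $ (a, b) $ (a, b))"
    unfolding trace_def by (rule sum_UNIV_prod)
  also have "\<dots> = (\<Sum>a\<in>UNIV. \<Sum>b\<in>UNIV.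
      of_real (\<Sum>i<J. \<Sum>k<4. alice_weight (M i) k a * bob_weight (\<sigma> i) k b))"
    by (simp only: rhoAB_diag[OF assms])
  also have "\<dots> = of_real (\<Sum>a\<in>UNIV. \<Sum>b\<in>UNIV. \<Sum>i<J. \<Sum>k<4.
      alice_weight (M i) k a * bob_weight (\<sigma> i) k b)"
    by simp
  also have "\<dots> = of_real (\<Sum>i<J. total_weight (M i) (\<sigma> i))"
    unfolding total_weight_def by (subst sum_swap_innermost) (rule refl)
  finally show ?thesis .
qed

lemma bit_error_rhoAB:
  assumes "\<forall>i<J. positive_op (M i)"
  shows "bit_error (rhoAB J M \<sigma>)
    = (\<Sum>i<J. error_weight (M i) (\<sigma> i)) / (\<Sum>i<J. total_weight (M i) (\<sigma> i))"
proof -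
  have "braket (kronv z0 z1) (rhoAB J M \<sigma> *v kronv z0 z1)
      + braket (kronv z1 z0) (rhoAB J M \<sigma> *v kronv z1 z0)
      = of_real (\<Sum>i<J. error_weight (M i) (\<sigma> i))"
    unfolding kronv_z_axis braket_axis_diag rhoAB_diag[OF assms] error_weight_def
    by (simp add: sum.distrib)
  then show ?thesis
    unfolding bit_error_def trace_rhoAB[OF assms] by (simp flip: of_real_divide)
qed

section \<open>The weights in closed form\<close>

lemma mpow_mult_vec_small:
  "mpow A 0 *v v = v" "mpow A 1 *v v = A *v v"
  "mpow A 2 *v v = A *v (A *v v)" "mpow A 3 *v v = A *v (A *v (A *v v))"
  by (simp_all add: numeral_3_eq_3 numeral_2_eq_2 matrix_vector_mul_assoc)

lemma alice_weight_table:
  fixes M :: qop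
  defines "Q \<equiv> \<lambda>a b. a*a * Re (M$0$0) + a*b * (Re (M$0$1) + Re (M$1$0)) + b*b * Re (M$1$1)"
  shows "alice_weight M 0 0 = Q c8 s8" "alice_weight M 0 1 = Q s8 c8"
    "alice_weight M 1 0 = Q c8 (- s8)" "alice_weight M 1 1 = Q c8 s8"
    "alice_weight M 2 0 = Q s8 (- c8)" "alice_weight M 2 1 = Q c8 (- s8)"
    "alice_weight M 3 0 = Q (- s8) (- c8)" "alice_weight M 3 1 = Q s8 (- c8)"
  unfolding alice_weight_def Let_def tensor_slice_Psi Q_def mpow_mult_vec_small Rot_orbit Re_braket_vec2_mult
  by (rule refl)+

lemma bob_weight_table:
  fixes s :: qvec
  defines "P \<equiv> \<lambda>a b. (a*a * (cmod (s$0))\<^sup>2 + 2 * (a*b) * Re (s$0 * cnj (s$1)) + b*b * (cmod (s$1))\<^sup>2) / 2"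
  shows "bob_weight s 0 0 = P c8 (- s8)" "bob_weight s 0 1 = P (- s8) c8"
    "bob_weight s 1 0 = P s8 (- c8)" "bob_weight s 1 1 = P s8 c8"
    "bob_weight s 2 0 = P (- s8) (- c8)" "bob_weight s 2 1 = P c8 s8"
    "bob_weight s 3 0 = P (- c8) (- s8)" "bob_weight s 3 1 = P c8 (- s8)"
proof -
  have "(cmod (braket ((sqrt 2 / 2) *\<^sub>R v) s))\<^sup>2 = (cmod (braket v s))\<^sup>2 / 2" for v
    by (simp add: braket_scaleR_left norm_mult power_mult_distrib power_divide)
  then show "bob_weight s 0 0 = P c8 (- s8)" "bob_weight s 0 1 = P (- s8) c8"
    "bob_weight s 1 0 = P s8 (- c8)" "bob_weight s 1 1 = P s8 c8"
    "bob_weight s 2 0 = P (- s8) (- c8)" "bob_weight s 2 1 = P c8 s8"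
    "bob_weight s 3 0 = P (- c8) (- s8)" "bob_weight s 3 1 = P c8 (- s8)"
    unfolding bob_weight_def column_Filt P_def mpow_mult_vec_small matrix_vector_mult_scaleR_right Rot_orbit
    by (simp_all only: cmod_braket_vec2)
qed

lemma sum_lessThan_4: "(\<Sum>k<4. f k) = f 0 + f 1 + f 2 + f (3::nat)"
  by (simp add: numeral_eq_Suc)

lemma weight_closed_forms:
  fixes M :: qop and s :: qvec
  defines "p \<equiv> Re (M$0$0)" and "q \<equiv> Re (M$0$1) + Re (M$1$0)" and "r \<equiv> Re (M$1$1)"
    and "X \<equiv> (cmod (s$0))\<^sup>2" and "Y \<equiv> Re (s$0 * cnj (s$1))" and "Z \<equiv> (cmod (s$1))\<^sup>2"
  shows "error_weight M s = (p*X + r*Z) / 2 + 3/2 * (p*Z + r*X) - q*Y"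
    and "total_weight M s = 3/2 * (p*X + r*Z) + 5/2 * (p*Z + r*X) - q*Y"
proof -
  have s8_c8: "s8 * c8 = sqrt 2 / 4"
    using c8_s8_products(3) by (simp add: mult.commute)
  have sqrt2_sqrt2: "sqrt 2 * (sqrt 2 * x) = 2 * x" for x
    by (simp add: mult.assoc[symmetric])
  note c8_s8_simps = mult_minus_left mult_minus_right minus_minus c8_s8_products s8_c8
  note tables = alice_weight_table[of M, folded p_def q_def r_def]
    bob_weight_table[of s, folded X_def Y_def Z_def]
  show "error_weight M s = (p*X + r*Z) / 2 + 3/2 * (p*Z + r*X) - q*Y"
    unfolding error_weight_def sum_lessThan_4 tables
    by (simp only: c8_s8_simps) (simp add: field_simps sqrt2_sqrt2)
  show "total_weight M s = 3/2 * (p*X + r*Z) + 5/2 * (p*Z + r*X) - q*Y"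
    unfolding total_weight_def sum_lessThan_4 sum_UNIV_2 tables
    by (simp only: c8_s8_simps) (simp add: field_simps sqrt2_sqrt2)
qed

lemma error_weight_excess:
  fixes M :: qop and s :: qvec
  defines "x \<equiv> vec2 (Re (s$1)) (- Re (s$0))" and "y \<equiv> vec2 (Im (s$1)) (- Im (s$0))"
  shows "3 * error_weight M s - total_weight M s = 2 * (Re (braket x (M *v x)) + Re (braket y (M *v y)))"
  unfolding weight_closed_forms x_def y_def Re_braket_vec2_mult cmod_power2
  by (simp add: power2_eq_square algebra_simps)

lemma total_weight_le_error_weight:
  assumes "positive_op M"
  shows "total_weight M s \<le> 3 * error_weight M s"
proof -
  have nonneg: "0 \<le> Re (braket v (M *v v))" for v
    using assms unfolding positive_op_def by blast
  show ?thesis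
    using error_weight_excess[of M s] nonneg[of "vec2 (Re (s$1)) (- Re (s$0))"]
      nonneg[of "vec2 (Im (s$1)) (- Im (s$0))"]
    by (smt (verit))
qed

lemma bit_error_rhoAB_ge_one_third:
  assumes pos: "\<forall>i<J. positive_op (M i)" and trace_pos: "Re (trace (rhoAB J M \<sigma>)) > 0"
  shows "bit_error (rhoAB J M \<sigma>) \<ge> 1/3"
proof -
  have "(\<Sum>i<J. total_weight (M i) (\<sigma> i)) \<le> 3 * (\<Sum>i<J. error_weight (M i) (\<sigma> i))"
    unfolding sum_distrib_left using pos by (intro sum_mono total_weight_le_error_weight) simp
  moreover have "(\<Sum>i<J. total_weight (M i) (\<sigma> i)) > 0"
    using trace_pos by (simp add: trace_rhoAB[OF pos])
  ultimately show ?thesis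
    by (simp add: bit_error_rhoAB[OF pos] field_simps)
qed

lemma z_basis_attack:
  defines "M \<equiv> \<lambda>i::nat. outer z0 z0" and "\<sigma> \<equiv> \<lambda>i::nat. z0"
  shows "valid_attack 1 (outer z1 z1) M \<sigma>"
    and "Re (trace (rhoAB 1 M \<sigma>)) = 3/2"
    and "bit_error (rhoAB 1 M \<sigma>) = 1/3"
proof -
  have pos: "\<forall>i<1. positive_op (M i)"
    by (simp add: M_def positive_op_outer)
  have weights: "error_weight (M 0) (\<sigma> 0) = 1/2" "total_weight (M 0) (\<sigma> 0) = 3/2"
    by (simp_all add: M_def \<sigma>_def weight_closed_forms z0_eq outer_vec2)
  show "valid_attack 1 (outer z1 z1) M \<sigma>"
    using positive_op_outer[of z0] positive_op_outer[of z1]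
    by (simp add: valid_attack_def M_def \<sigma>_def z0_eq z1_eq outer_vec2 mat2_add mat_1_eq_mat2
        norm_vec_def L2_set_def sum_UNIV_2)
  show "Re (trace (rhoAB 1 M \<sigma>)) = 3/2"
    unfolding trace_rhoAB[OF pos] by (simp add: weights)
  show "bit_error (rhoAB 1 M \<sigma>) = 1/3"
    unfolding bit_error_rhoAB[OF pos] by (simp add: weights)
qed

theorem theorem4:
  shows "(\<forall>J Mvac M \<sigma>. valid_attack J Mvac M \<sigma> \<and> Re (trace (rhoAB J M \<sigma>)) > 0
            \<longrightarrow> bit_error (rhoAB J M \<sigma>) \<ge> 1/3)
       \<and> (\<exists>J Mvac M \<sigma>. valid_attack J Mvac M \<sigma> \<and> Re (trace (rhoAB J M \<sigma>)) > 0
            \<and> bit_error (rhoAB J M \<sigma>) = 1/3)"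
proof (intro conjI allI impI)
  fix J Mvac M \<sigma>
  assume "valid_attack J Mvac M \<sigma> \<and> Re (trace (rhoAB J M \<sigma>)) > 0"
  then show "bit_error (rhoAB J M \<sigma>) \<ge> 1/3"
    by (intro bit_error_rhoAB_ge_one_third) (simp_all add: valid_attack_def)
next
  show "\<exists>J Mvac M \<sigma>. valid_attack J Mvac M \<sigma> \<and> Re (trace (rhoAB J M \<sigma>)) > 0
            \<and> bit_error (rhoAB J M \<sigma>) = 1/3"
    using z_basis_attack by fastforce
qed

end
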